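(* Let $3\le n\le N$. For every $x$ at which all the functions $\Theta_n,\Lambda_n(\cdot;i,k)$ ($i,k\in\{1,2\}$) are defined at both $x$ and $x-1$ and $\Lambda_n(x;1,1)\neq 0$, $$\mathcal F_n(x)\nabla^2\mathbb K_n(x)+\mathcal G_n(x)\nabla\mathbb K_n(x)+\mathcal H_n(x)\mathbb K_n(x)=0,$$ where $\nabla^2=\nabla\circ\nabla$, $\mathcal F_n(x)=\Theta_n(x)\Theta_n(x-1)$, $$\mathcal G_n(x)=\Theta_n(x)\big(\nabla\Theta_n(x)+\Lambda_n(x-1;2,1)+\Lambda_n(x;1,2)\big)-\frac{\nabla\Lambda_n(x;1,1)\,\big(\Theta_n(x)+\Lambda_n(x;1,2)\big)\Theta_n(x)}{\Lambda_n(x;1,1)},$$ $$\mathcal H_n(x)=\Theta_n(x)\nabla\Lambda_n(x;2,1)+\Lambda_n(x;1,2)\Lambda_n(x;2,1)-\frac{\nabla\Lambda_n(x;1,1)\,\Lambda_n(x;2,1)\big(\Theta_n(x)+\Lambda_n(x;1,2)\big)}{\Lambda_n(x;1,1)}-\Lambda_n(x-1;1,1)\Lambda_n(x;2,2).$$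
   Context: Fix an integer $N\ge 1$ and $0<p<1$. Notation: $(a)_0=1$, $(a)_k=a(a+1)\cdots(a+k-1)$ (Pochhammer symbol); $[z]_0=1$, $[z]_k=z(z-1)\cdots(z-k+1)$ (falling factorial). For a function $f$, $\Delta f(x)=f(x+1)-f(x)$, $\nabla f(x)=f(x)-f(x-1)$, $\Delta^0$ is the identity and $\Delta^k=\Delta\circ\Delta^{k-1}$. For $0\le n\le N$ the monic Kravchuk polynomial is $K_n(x)=p^n(-N)_n\sum_{k=0}^{n}\frac{(-n)_k(-x)_k}{(-N)_k\,k!}p^{-k}$, and $K_{-1}=0$; these are monic of degree $n$ and orthogonal on $\{0,\dots,N\}$ with respect to the binomial weight $w(x)=\binom{N}{x}p^x(1-p)^{N-x}$, with $\|K_n\|^2=\sum_{x=0}^N K_n(x)^2w(x)=n!(-N)_np^n(p-1)^n$. They satisfy $xK_n=K_{n+1}+\alpha_nK_n+\beta_nK_{n-1}$ with $\alpha_n=p(N-n)+n(1-p)$, $\beta_n=np(1-p)(N-n+1)$. For $1\le n\le N+1$ and integers $i,l\ge0$, $\mathscr K_{n-1}^{(i,l)}(x,y)=\sum_{k=0}^{n-1}\frac{\Delta^iK_k(x)\,\Delta^lK_k(y)}{\|K_k\|^2}$. Fix $\lambda,\mu>0$ and an integer $j\ge 0$. On real polynomials define $\langle f,g\rangle_{\lambda,\mu}=\sum_{x=0}^N f(x)g(x)w(x)+\lambda\Delta^jf(0)\Delta^jg(0)+\mu\Delta^jf(N)\Delta^jg(N)$. For $0\le n\le N$, $\mathbb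 K_n=\mathbb K_n^{(j)}$ is the monic polynomial of degree $n$ with $\langle\mathbb K_n,q\rangle_{\lambda,\mu}=0$ for all polynomials $q$ of degree $<n$ (Kravchuk–Sobolev polynomials). For $1\le n\le N$: $\mathscr A_n(x,y)=\frac{j!}{\|K_{n-1}\|^2[x-y]_{j+1}}\sum_{k=0}^{j}\frac{\Delta^kK_{n-1}(y)}{k!}[x-y]_k$, $\mathscr B_n(x,y)=-\frac{j!}{\|K_{n-1}\|^2[x-y]_{j+1}}\sum_{k=0}^{j}\frac{\Delta^kK_{n}(y)}{k!}[x-y]_k$; $k_{00}=\mathscr K^{(j,j)}_{n-1}(0,0)$, $k_{0N}=\mathscr K^{(j,j)}_{n-1}(0,N)$, $k_{N0}=\mathscr K^{(j,j)}_{n-1}(N,0)$, $k_{NN}=\mathscr K^{(j,j)}_{n-1}(N,N)$, $d_0=\Delta^jK_n(0)$, $d_N=\Delta^jK_n(N)$, $\delta_n=(1+\lambda k_{00})(1+\mu k_{NN})-\lambda\mu k_{0N}k_{N0}$ (which is nonzero), $\Phi_1(n)=\frac{d_0(1+\mu k_{NN})-\mu k_{0N}d_N}{\delta_n}$, $\Phi_2(n)=\frac{(1+\lambda k_{00})d_N-\lambda k_{N0}d_0}{\delta_n}$; $\mathscr C_{1,n}(x)=1-\lambda\Phi_1(n)\mathscr A_n(x,0)-\mu\Phi_2(n)\mathscr A_n(x,N)$ and $\mathscr D_{1,n}(x)=-\lambda\Phi_1(n)\mathscr B_n(x,0)-\mu\Phi_2(n)\mathscr B_n(x,N)$. For $2\le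 m\le N$ define $\mathscr E_{1,m}(x)=x\nabla\mathscr C_{1,m}(x)+m\,\mathscr C_{1,m}(x-1)-\frac{(m-1)p(N-m+2)\mathscr D_{1,m}(x-1)}{\beta_{m-1}}$ and $\mathscr F_{1,m}(x)=x\nabla\mathscr D_{1,m}(x)+mp(N-m+1)\mathscr C_{1,m}(x-1)+\frac{(m-1)p(N-m+2)(x-\alpha_{m-1})\mathscr D_{1,m}(x-1)}{\beta_{m-1}}+(m-1)\mathscr D_{1,m}(x-1)$. For $3\le n\le N$ define $\mathscr C_{2,n}(x)=-\frac{\mathscr D_{1,n-1}(x)}{\beta_{n-1}}$, $\mathscr D_{2,n}(x)=\mathscr C_{1,n-1}(x)+\mathscr C_{2,n}(x)(\alpha_{n-1}-x)$, $\mathscr E_{2,n}(x)=-\frac{\mathscr F_{1,n-1}(x)}{\beta_{n-1}}$, $\mathscr F_{2,n}(x)=\mathscr E_{1,n-1}(x)+\mathscr E_{2,n}(x)(\alpha_{n-1}-x)$, and $\Theta_n(x)=x\big(\mathscr C_{1,n}(x)\mathscr D_{2,n}(x)-\mathscr C_{2,n}(x)\mathscr D_{1,n}(x)\big)$, $\Lambda_n(x;i,k)=(-1)^k\big(\mathscr E_{k,n}(x)\mathscr D_{i,n}(x)-\mathscr F_{k,n}(x)\mathscr C_{i,n}(x)\big)$ for $i,k\in\{1,2\}$. *)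

theory Defs
  imports "HOL-Computational_Algebra.Polynomial"
begin

definition ffac :: "real \<Rightarrow> nat \<Rightarrow> real" where
  "ffac z k = (\<Prod>i<k. (z - real i))"

definition fdiff :: "(real \<Rightarrow> real) \<Rightarrow> real \<Rightarrow> real" where
  "fdiff f x = f (x + 1) - f x"

definition fdiffn :: "nat \<Rightarrow> (real \<Rightarrow> real) \<Rightarrow> real \<Rightarrow> real" where
  "fdiffn k f = (fdiff ^^ k) f"

definition bdiff :: "(real \<Rightarrow> real) \<Rightarrow> real \<Rightarrow> real" where
  "bdiff f x = f x - f (x - 1)"

definition wt :: "nat \<Rightarrow> real \<Rightarrow> nat \<Rightarrow> real" where
  "wt N p x = real (N choose x) * p ^ x * (1 - p) ^ (N - x)"

text \<open>Monic Kravchuk polynomial K_n (as a function of real x).\<close>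
definition Kr :: "nat \<Rightarrow> real \<Rightarrow> nat \<Rightarrow> real \<Rightarrow> real" where
  "Kr N p n x = p ^ n * pochhammer (- real N) n *
     (\<Sum>k\<le>n. pochhammer (- real n) k * pochhammer (- x) k
               / (pochhammer (- real N) k * fact k) * (1 / p) ^ k)"

definition Knorm :: "nat \<Rightarrow> real \<Rightarrow> nat \<Rightarrow> real" where
  "Knorm N p n = (\<Sum>x\<le>N. (Kr N p n (real x))\<^sup>2 * wt N p x)"

definition alpha :: "nat \<Rightarrow> real \<Rightarrow> nat \<Rightarrow> real" where
  "alpha N p n = p * (real N - real n) + real n * (1 - p)"

definition beta :: "nat \<Rightarrow> real \<Rightarrow> nat \<Rightarrow> real" where
  "beta N p n = real n * p * (1 - p) * (real N - real n + 1)"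

text \<open>Kernel: kern N p m i l x y = sum_{k=0}^{m} Delta^i K_k(x) Delta^l K_k(y) / ||K_k||^2.
  The paper's kernel with index n-1 is kern N p (n-1).\<close>
definition kern :: "nat \<Rightarrow> real \<Rightarrow> nat \<Rightarrow> nat \<Rightarrow> nat \<Rightarrow> real \<Rightarrow> real \<Rightarrow> real" where
  "kern N p m i l x y = (\<Sum>k\<le>m. fdiffn i (Kr N p k) x * fdiffn l (Kr N p k) y / Knorm N p k)"

definition sip :: "nat \<Rightarrow> real \<Rightarrow> real \<Rightarrow> real \<Rightarrow> nat \<Rightarrow>
    (real \<Rightarrow> real) \<Rightarrow> (real \<Rightarrow> real) \<Rightarrow> real" where
  "sip N p lam mu j f g =
     (\<Sum>x\<le>N. f (real x) * g (real x) * wt N p x)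
     + lam * fdiffn j f 0 * fdiffn j g 0
     + mu * fdiffn j f (real N) * fdiffn j g (real N)"

definition KSpoly :: "nat \<Rightarrow> real \<Rightarrow> real \<Rightarrow> real \<Rightarrow> nat \<Rightarrow> nat \<Rightarrow> real poly" where
  "KSpoly N p lam mu j n = (THE q. degree q = n \<and> lead_coeff q = 1 \<and>
      (\<forall>r. degree r < n \<longrightarrow> sip N p lam mu j (poly q) (poly r) = 0))"

definition KS :: "nat \<Rightarrow> real \<Rightarrow> real \<Rightarrow> real \<Rightarrow> nat \<Rightarrow> nat \<Rightarrow> real \<Rightarrow> real" where
  "KS N p lam mu j n = poly (KSpoly N p lam mu j n)"

definition An :: "nat \<Rightarrow> real \<Rightarrow> nat \<Rightarrow> nat \<Rightarrow> real \<Rightarrow> real \<Rightarrow> real" where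
  "An N p j n x y = fact j / (Knorm N p (n - 1) * ffac (x - y) (j + 1)) *
     (\<Sum>k\<le>j. fdiffn k (Kr N p (n - 1)) y / fact k * ffac (x - y) k)"

definition Bn :: "nat \<Rightarrow> real \<Rightarrow> nat \<Rightarrow> nat \<Rightarrow> real \<Rightarrow> real \<Rightarrow> real" where
  "Bn N p j n x y = - (fact j / (Knorm N p (n - 1) * ffac (x - y) (j + 1))) *
     (\<Sum>k\<le>j. fdiffn k (Kr N p n) y / fact k * ffac (x - y) k)"

definition deltan :: "nat \<Rightarrow> real \<Rightarrow> real \<Rightarrow> real \<Rightarrow> nat \<Rightarrow> nat \<Rightarrow> real" where
  "deltan N p lam mu j n =
     (1 + lam * kern N p (n - 1) j j 0 0) * (1 + mu * kern N p (n - 1) j j (real N) (real N))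
     - lam * mu * kern N p (n - 1) j j 0 (real N) * kern N p (n - 1) j j (real N) 0"

definition Phi1 :: "nat \<Rightarrow> real \<Rightarrow> real \<Rightarrow> real \<Rightarrow> nat \<Rightarrow> nat \<Rightarrow> real" where
  "Phi1 N p lam mu j n =
     (fdiffn j (Kr N p n) 0 * (1 + mu * kern N p (n - 1) j j (real N) (real N))
      - mu * kern N p (n - 1) j j 0 (real N) * fdiffn j (Kr N p n) (real N))
     / deltan N p lam mu j n"

definition Phi2 :: "nat \<Rightarrow> real \<Rightarrow> real \<Rightarrow> real \<Rightarrow> nat \<Rightarrow> nat \<Rightarrow> real" where
  "Phi2 N p lam mu j n =
     ((1 + lam * kern N p (n - 1) j j 0 0) * fdiffn j (Kr N p n) (real N)
      - lam * kern N p (n - 1) j j (real N) 0 * fdiffn j (Kr N p n) 0)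
     / deltan N p lam mu j n"

definition C1 :: "nat \<Rightarrow> real \<Rightarrow> real \<Rightarrow> real \<Rightarrow> nat \<Rightarrow> nat \<Rightarrow> real \<Rightarrow> real" where
  "C1 N p lam mu j n x = 1 - lam * Phi1 N p lam mu j n * An N p j n x 0
                           - mu * Phi2 N p lam mu j n * An N p j n x (real N)"

definition D1 :: "nat \<Rightarrow> real \<Rightarrow> real \<Rightarrow> real \<Rightarrow> nat \<Rightarrow> nat \<Rightarrow> real \<Rightarrow> real" where
  "D1 N p lam mu j n x = - lam * Phi1 N p lam mu j n * Bn N p j n x 0
                         - mu * Phi2 N p lam mu j n * Bn N p j n x (real N)"

definition E1 :: "nat \<Rightarrow> real \<Rightarrow> real \<Rightarrow> real \<Rightarrow> nat \<Rightarrow> nat \<Rightarrow> real \<Rightarrow> real" where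
  "E1 N p lam mu j m x = x * bdiff (C1 N p lam mu j m) x + real m * C1 N p lam mu j m (x - 1)
     - (real m - 1) * p * (real N - real m + 2) * D1 N p lam mu j m (x - 1) / beta N p (m - 1)"

definition F1 :: "nat \<Rightarrow> real \<Rightarrow> real \<Rightarrow> real \<Rightarrow> nat \<Rightarrow> nat \<Rightarrow> real \<Rightarrow> real" where
  "F1 N p lam mu j m x = x * bdiff (D1 N p lam mu j m) x
     + real m * p * (real N - real m + 1) * C1 N p lam mu j m (x - 1)
     + (real m - 1) * p * (real N - real m + 2) * (x - alpha N p (m - 1))
         * D1 N p lam mu j m (x - 1) / beta N p (m - 1)
     + (real m - 1) * D1 N p lam mu j m (x - 1)"

definition C2 :: "nat \<Rightarrow> real \<Rightarrow> real \<Rightarrow> real \<Rightarrow> nat \<Rightarrow> nat \<Rightarrow> real \<Rightarrow> real" where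
  "C2 N p lam mu j n x = - D1 N p lam mu j (n - 1) x / beta N p (n - 1)"

definition D2 :: "nat \<Rightarrow> real \<Rightarrow> real \<Rightarrow> real \<Rightarrow> nat \<Rightarrow> nat \<Rightarrow> real \<Rightarrow> real" where
  "D2 N p lam mu j n x = C1 N p lam mu j (n - 1) x + C2 N p lam mu j n x * (alpha N p (n - 1) - x)"

definition E2 :: "nat \<Rightarrow> real \<Rightarrow> real \<Rightarrow> real \<Rightarrow> nat \<Rightarrow> nat \<Rightarrow> real \<Rightarrow> real" where
  "E2 N p lam mu j n x = - F1 N p lam mu j (n - 1) x / beta N p (n - 1)"

definition F2 :: "nat \<Rightarrow> real \<Rightarrow> real \<Rightarrow> real \<Rightarrow> nat \<Rightarrow> nat \<Rightarrow> real \<Rightarrow> real" where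
  "F2 N p lam mu j n x = E1 N p lam mu j (n - 1) x + E2 N p lam mu j n x * (alpha N p (n - 1) - x)"

definition Cf :: "nat \<Rightarrow> nat \<Rightarrow> real \<Rightarrow> real \<Rightarrow> real \<Rightarrow> nat \<Rightarrow> nat \<Rightarrow> real \<Rightarrow> real" where
  "Cf i N p lam mu j n x = (if i = 1 then C1 N p lam mu j n x else C2 N p lam mu j n x)"
definition Df :: "nat \<Rightarrow> nat \<Rightarrow> real \<Rightarrow> real \<Rightarrow> real \<Rightarrow> nat \<Rightarrow> nat \<Rightarrow> real \<Rightarrow> real" where
  "Df i N p lam mu j n x = (if i = 1 then D1 N p lam mu j n x else D2 N p lam mu j n x)"
definition Ef :: "nat \<Rightarrow> nat \<Rightarrow> real \<Rightarrow> real \<Rightarrow> real \<Rightarrow> nat \<Rightarrow> nat \<Rightarrow> real \<Rightarrow> real" where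
  "Ef i N p lam mu j n x = (if i = 1 then E1 N p lam mu j n x else E2 N p lam mu j n x)"
definition Ff :: "nat \<Rightarrow> nat \<Rightarrow> real \<Rightarrow> real \<Rightarrow> real \<Rightarrow> nat \<Rightarrow> nat \<Rightarrow> real \<Rightarrow> real" where
  "Ff i N p lam mu j n x = (if i = 1 then F1 N p lam mu j n x else F2 N p lam mu j n x)"

definition Theta :: "nat \<Rightarrow> real \<Rightarrow> real \<Rightarrow> real \<Rightarrow> nat \<Rightarrow> nat \<Rightarrow> real \<Rightarrow> real" where
  "Theta N p lam mu j n x = x * (C1 N p lam mu j n x * D2 N p lam mu j n x
                                 - C2 N p lam mu j n x * D1 N p lam mu j n x)"

definition Lam :: "nat \<Rightarrow> real \<Rightarrow> real \<Rightarrow> real \<Rightarrow> nat \<Rightarrow> nat \<Rightarrow> real \<Rightarrow> nat \<Rightarrow> nat \<Rightarrow> real" where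
  "Lam N p lam mu j n x i k = (-1) ^ k *
     (Ef k N p lam mu j n x * Df i N p lam mu j n x - Ff k N p lam mu j n x * Cf i N p lam mu j n x)"

text \<open>The only denominators depending on x are [x]_{j+1} and [x-N]_{j+1} (from A_n(x,0),
  A_n(x,N), B_n(x,0), B_n(x,N)); a point is admissible if neither vanishes.
  Theta_n is defined at x iff x is admissible; Lambda_n(.;i,k) is defined at x iff
  x and x-1 are admissible.\<close>
definition admissible :: "nat \<Rightarrow> nat \<Rightarrow> real \<Rightarrow> bool" where
  "admissible N j x \<longleftrightarrow> ffac x (j + 1) \<noteq> 0 \<and> ffac (x - real N) (j + 1) \<noteq> 0"

end

(*
  The Kravchuk-Sobolev polynomial is K_n minus a combination of the two reproducing kernels
  K_{n-1}^{(0,j)}(x,0) and K_{n-1}^{(0,j)}(x,N), with weights fixed by Cramer's rule.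
  The Christoffel-Darboux formula writes (x - y) K_{n-1}^{(0,0)}(x,y) in terms of K_n and K_{n-1},
  and a discrete Leibniz rule for Delta^j of a quotient by the linear factor x - y turns this into
  K_{n-1}^{(0,j)}(x,y) = A_n(x,y) K_n(x) + B_n(x,y) K_{n-1}(x); hence
  KS_n = C_{1,n} K_n + D_{1,n} K_{n-1}.  The structure relation
  x nabla K_m = m K_m + m p (N - m + 1) K_{m-1} and the three-term recurrence express
  x nabla KS_n, KS_{n-1} and x nabla KS_{n-1} in the same basis {K_n, K_{n-1}}; solving the
  resulting 2x2 system gives the first-order equations
    Theta_n nabla KS_n     = - Lambda_n(2,1) KS_n + Lambda_n(1,1) KS_{n-1},
    Theta_n nabla KS_{n-1} =   Lambda_n(2,2) KS_n - Lambda_n(1,2) KS_{n-1}.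
  Eliminating KS_{n-1} between them at x and x - 1 gives the second-order equation.
*)

theory Submission
  imports Defs "HOL-Analysis.Convex"
begin

subsection \<open>Finite differences\<close>

lemma fdiffn_0 [simp]: "fdiffn 0 f = f"
  unfolding fdiffn_def by simp

lemma fdiffn_Suc: "fdiffn (Suc j) f t = fdiffn j f (t + 1) - fdiffn j f t"
  unfolding fdiffn_def fdiff_def by simp

lemma fdiffn_sum:
  "fdiffn j (\<lambda>t. \<Sum>k\<in>A. c k * f k t) t = (\<Sum>k\<in>A. c k * fdiffn j (f k) t)"
  by (induction j arbitrary: t) (simp_all add: fdiffn_Suc sum_subtractf[symmetric] right_diff_distrib)

lemma fdiffn_linear:
  "fdiffn j (\<lambda>t. a * f t + b * g t) t = a * fdiffn j f t + b * fdiffn j g t"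
  by (induction j arbitrary: t) (simp_all add: fdiffn_Suc algebra_simps)

lemma fdiffn_cmult: "fdiffn j (\<lambda>t. a * f t) t = a * fdiffn j f t"
  using fdiffn_linear[of j a f 0 f] by simp

lemma fdiffn_diff: "fdiffn j (\<lambda>t. f t - g t) t = fdiffn j f t - fdiffn j g t"
  using fdiffn_linear[of j 1 f "-1" g] by simp

lemma ffac_Suc: "ffac z (Suc k) = ffac z k * (z - real k)"
  unfolding ffac_def by simp

lemma fdiffn_linear_factor:
  assumes "\<And>t. (x - t) * S t = f t"
  shows "fdiffn j f t = (x - t - real j) * fdiffn j S t - real j * fdiffn (j - 1) S t"
proof (induction j arbitrary: t)
  case 0
  then show ?case using assms by simp
next
  case (Suc j)
  have "fdiffn j S (t + 1) = fdiffn j S t + fdiffn (Suc j) S t"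
    by (simp add: fdiffn_Suc)
  moreover have "fdiffn (j - 1) S (t + 1) = fdiffn (j - 1) S t + fdiffn j S t" if "j > 0"
    using that by (cases j) (simp_all add: fdiffn_Suc)
  ultimately show ?case
    unfolding fdiffn_Suc[of j f] Suc by (cases "j = 0") (simp_all add: algebra_simps)
qed

lemma fdiffn_divide_linear_factor:
  assumes h: "\<And>t. (x - t) * S t = f t" and nz: "ffac (x - y) (Suc j) \<noteq> 0"
  shows "fdiffn j S y = fact j / ffac (x - y) (Suc j) * (\<Sum>k\<le>j. fdiffn k f y / fact k * ffac (x - y) k)"
  using nz
proof (induction j)
  case 0
  then have "x - y \<noteq> 0" by (simp add: ffac_def)
  then show ?case using h[of y] by (simp add: ffac_def field_simps)
next
  case (Suc j)
  define F where "F = ffac (x - y) (Suc j)"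
  define z where "z = x - y - real (Suc j)"
  define T where "T = (\<Sum>k\<le>j. fdiffn k f y / fact k * ffac (x - y) k)"
  have F0: "F \<noteq> 0" and z0: "z \<noteq> 0"
    using Suc.prems unfolding F_def z_def ffac_Suc[of _ "Suc j"] by auto
  have IH: "fdiffn j S y = fact j / F * T"
    unfolding F_def T_def using Suc.IH F0[unfolded F_def] .
  have "fdiffn (Suc j) f y = z * fdiffn (Suc j) S y - (real j + 1) * fdiffn j S y"
    unfolding z_def using fdiffn_linear_factor[OF h, of "Suc j" y] by simp
  then have "fdiffn (Suc j) S y = (fdiffn (Suc j) f y + fact (Suc j) / F * T) / z"
    unfolding IH using z0 by (simp add: field_simps)
  also have "\<dots> = fact (Suc j) / (F * z) * (T + fdiffn (Suc j) f y / fact (Suc j) * F)"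
    using F0 z0 by (simp add: field_simps del: fact_Suc)
  also have "\<dots> = fact (Suc j) / ffac (x - y) (Suc (Suc j)) * (\<Sum>k\<le>Suc j. fdiffn k f y / fact k * ffac (x - y) k)"
    unfolding F_def z_def T_def by (simp add: ffac_Suc[of _ "Suc j"] algebra_simps)
  finally show ?case .
qed

subsection \<open>Kravchuk polynomials in the basis \<open>(-x)\<^sub>k\<close>\<close>

definition krav_coeff :: "nat \<Rightarrow> real \<Rightarrow> nat \<Rightarrow> nat \<Rightarrow> real" where
  "krav_coeff N p n k = p ^ n * pochhammer (- real N) n *
     (pochhammer (- real n) k / (pochhammer (- real N) k * fact k) * (1/p) ^ k)"

lemma Kr_eq_sum_krav_coeff: "Kr N p n x = (\<Sum>k\<le>n. krav_coeff N p n k * pochhammer (-x) k)"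
  unfolding Kr_def krav_coeff_def sum_distrib_left by (simp add: ac_simps)

lemma krav_coeff_eq_0: "n < k \<Longrightarrow> krav_coeff N p n k = 0"
  unfolding krav_coeff_def by (simp add: pochhammer_of_nat_eq_0_iff)

lemma Kr_eq_sum_krav_coeff_upto:
  "n \<le> M \<Longrightarrow> Kr N p n x = (\<Sum>k\<le>M. krav_coeff N p n k * pochhammer (-x) k)"
  unfolding Kr_eq_sum_krav_coeff by (rule sum.mono_neutral_left) (auto simp: krav_coeff_eq_0)

lemma Kr_0 [simp]: "Kr N p 0 x = 1"
  unfolding Kr_def by simp

lemma Kr_1: "p \<noteq> 0 \<Longrightarrow> 1 \<le> N \<Longrightarrow> Kr N p (Suc 0) x = x - p * real N"
  unfolding Kr_def by (simp add: field_simps atMost_Suc)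

lemma krav_coeff_self:
  assumes "p \<noteq> 0" "n \<le> N"
  shows "krav_coeff N p n n = (-1) ^ n"
proof -
  have "pochhammer (- real n) n = (-1) ^ n * fact n"
    by (simp add: pochhammer_minus pochhammer_fact)
  moreover have "pochhammer (- real N) n \<noteq> 0"
    using assms(2) by (simp add: pochhammer_of_nat_eq_0_iff)
  ultimately show ?thesis
    unfolding krav_coeff_def using assms(1) by (simp add: field_simps power_one_over)
qed

lemma krav_coeff_Suc_index:
  assumes p: "p \<noteq> 0" and k: "k < N"
  shows "p * real (Suc k) * (real N - real k) * krav_coeff N p n (Suc k) = (real n - real k) * krav_coeff N p n k"
proof -
  have Nk: "- real N + real k \<noteq> 0" and F: "pochhammer (- real N) k \<noteq> 0"
    using k by (simp_all add: pochhammer_of_nat_eq_0_iff)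
  define D where "D = (- real N + real k) * (real k + 1) * p"
  have "krav_coeff N p n (Suc k) = p ^ n * pochhammer (- real N) n * ((- real n + real k) * pochhammer (- real n) k /
      (((- real N + real k) * pochhammer (- real N) k) * ((real k + 1) * fact k)) * ((1/p) * (1/p) ^ k))"
    unfolding krav_coeff_def by (simp only: pochhammer_rec' fact_Suc power_Suc) simp
  then have r: "krav_coeff N p n (Suc k) = krav_coeff N p n k * ((- real n + real k) / D)"
    unfolding krav_coeff_def D_def using Nk F p by (simp add: field_simps)
  have D0: "D \<noteq> 0"
    unfolding D_def using Nk p by simp
  have "p * real (Suc k) * (real N - real k) * krav_coeff N p n (Suc k)
      = - D * (krav_coeff N p n k * ((- real n + real k) / D))"
    unfolding r D_def by (simp add: algebra_simps)
  also have "\<dots> = (real n - real k) * krav_coeff N p n k"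
    using D0 by (simp add: field_simps)
  finally show ?thesis .
qed

lemma krav_coeff_Suc_degree:
  "(real k - real (Suc n)) * krav_coeff N p (Suc n) k = real (Suc n) * p * (real N - real n) * krav_coeff N p n k"
proof -
  have a: "(- real (Suc n) + real k) * pochhammer (- real (Suc n)) k = - real (Suc n) * pochhammer (- real n) k"
    using pochhammer_rec[of "- real (Suc n)" k] pochhammer_rec'[of "- real (Suc n)" k] by simp
  have b: "pochhammer (- real N) (Suc n) = (- real N + real n) * pochhammer (- real N) n"
    by (rule pochhammer_rec')
  have "(real k - real (Suc n)) * krav_coeff N p (Suc n) k = p ^ Suc n * pochhammer (- real N) (Suc n) *
      (((- real (Suc n) + real k) * pochhammer (- real (Suc n)) k) / (pochhammer (- real N) k * fact k) * (1/p) ^ k)"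
    unfolding krav_coeff_def by (simp add: algebra_simps)
  also have "\<dots> = real (Suc n) * p * (real N - real n) * krav_coeff N p n k"
    unfolding a b krav_coeff_def by (simp add: algebra_simps)
  finally show ?thesis .
qed

text \<open>For \<open>k \<le> m + 1\<close>, \<open>krav_coeff_Suc_degree\<close> and \<open>krav_coeff_Suc_index\<close> express every coefficient
  through \<open>a = krav_coeff N p (Suc m) k\<close>; after multiplying by \<open>m + 2 - k\<close> the recurrence is a
  polynomial identity.\<close>
lemma krav_coeff_recurrence:
  assumes p: "p \<noteq> 0" and mN: "Suc (Suc m) \<le> N"
  shows "real k * krav_coeff N p (Suc m) k - (if k = 0 then 0 else krav_coeff N p (Suc m) (k - 1))
       = krav_coeff N p (Suc (Suc m)) k + alpha N p (Suc m) * krav_coeff N p (Suc m) k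
         + beta N p (Suc m) * krav_coeff N p m k"
proof -
  consider "k \<le> Suc m" | "k = Suc (Suc m)" | "Suc (Suc m) < k" by linarith
  then show ?thesis
  proof cases
    case 1
    define a where "a = krav_coeff N p (Suc m) k"
    define prev where "prev = (if k = 0 then 0 else krav_coeff N p (Suc m) (k - 1))"
    have d: "real m + 2 - real k \<noteq> 0"
      using 1 by simp
    have c2: "(real m + 2 - real k) * krav_coeff N p (Suc (Suc m)) k = - ((real m + 2) * p * (real N - real m - 1) * a)"
      using krav_coeff_Suc_degree[of k "Suc m" N p] unfolding a_def by (simp add: algebra_simps)
    have c0: "beta N p (Suc m) * krav_coeff N p m k = (1 - p) * (real k - real m - 1) * a"
      using arg_cong[OF krav_coeff_Suc_degree[of k m N p], of "(*) (1 - p)"]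
      unfolding a_def beta_def by (simp add: algebra_simps)
    have cprev: "(real m + 2 - real k) * prev = p * real k * (real N - real k + 1) * a"
    proof (cases k)
      case (Suc i)
      then show ?thesis
        using krav_coeff_Suc_index[OF p, of i N "Suc m"] 1 mN unfolding a_def prev_def by (simp add: algebra_simps)
    qed (simp add: prev_def)
    have "(real m + 2 - real k) * ((real k * a - prev)
        - (krav_coeff N p (Suc (Suc m)) k + alpha N p (Suc m) * a + beta N p (Suc m) * krav_coeff N p m k)) = 0"
      using c2 c0 cprev unfolding alpha_def of_nat_Suc by algebra
    then show ?thesis
      using d unfolding a_def prev_def by simp
  next
    case 2
    then show ?thesis
      using krav_coeff_self[OF p, of "Suc m" N] krav_coeff_self[OF p mN] mN by (simp add: krav_coeff_eq_0)
  next
    case 3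
    then show ?thesis by (simp add: krav_coeff_eq_0)
  qed
qed

lemma mult_pochhammer_neg: "x * pochhammer (-x) k = real k * pochhammer (-x) k - pochhammer (-x) (Suc k)"
  by (simp add: pochhammer_rec' algebra_simps)

lemma bdiff_pochhammer_neg: "x * bdiff (\<lambda>y. pochhammer (-y) k) x = real k * pochhammer (-x) k"
proof (cases k)
  case (Suc i)
  have a: "pochhammer (-x) (Suc i) = (-x) * pochhammer (-x+1) i"
    by (simp only: pochhammer_rec)
  have b: "pochhammer (-(x-1)) (Suc i) = (-x+1+real i) * pochhammer (-x+1) i"
    by (simp only: pochhammer_rec') simp
  show ?thesis unfolding Suc bdiff_def a b by (simp add: algebra_simps)
qed (simp add: bdiff_def)

lemma Kr_three_term_Suc:
  assumes p: "p \<noteq> 0" and mN: "Suc (Suc m) \<le> N"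
  shows "x * Kr N p (Suc m) x = Kr N p (Suc (Suc m)) x + alpha N p (Suc m) * Kr N p (Suc m) x
          + beta N p (Suc m) * Kr N p m x"
proof -
  let ?c = "krav_coeff N p" and ?P = "\<lambda>k. pochhammer (-x) k"
  have shift: "(\<Sum>k\<le>Suc (Suc m). (if k = 0 then 0 else ?c (Suc m) (k - 1)) * ?P k) = (\<Sum>k\<le>Suc m. ?c (Suc m) k * ?P (Suc k))"
    by (subst sum.atMost_Suc_shift) simp
  have extend: "(\<Sum>k\<le>Suc (Suc m). real k * ?c (Suc m) k * ?P k) = (\<Sum>k\<le>Suc m. real k * ?c (Suc m) k * ?P k)"
    by (simp add: krav_coeff_eq_0)
  have "x * Kr N p (Suc m) x = (\<Sum>k\<le>Suc m. ?c (Suc m) k * (real k * ?P k - ?P (Suc k)))"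
    unfolding Kr_eq_sum_krav_coeff sum_distrib_left
    by (rule sum.cong) (auto simp: mult_pochhammer_neg[symmetric] ac_simps)
  also have "\<dots> = (\<Sum>k\<le>Suc (Suc m). (real k * ?c (Suc m) k - (if k = 0 then 0 else ?c (Suc m) (k - 1))) * ?P k)"
    unfolding left_diff_distrib sum_subtractf shift extend by (simp add: algebra_simps sum_subtractf)
  also have "\<dots> = (\<Sum>k\<le>Suc (Suc m). (?c (Suc (Suc m)) k + alpha N p (Suc m) * ?c (Suc m) k + beta N p (Suc m) * ?c m k) * ?P k)"
    using krav_coeff_recurrence[OF p mN] by simp
  also have "\<dots> = Kr N p (Suc (Suc m)) x + alpha N p (Suc m) * Kr N p (Suc m) x + beta N p (Suc m) * Kr N p m x"
    by (simp add: Kr_eq_sum_krav_coeff_upto[of "Suc m" "Suc (Suc m)"] Kr_eq_sum_krav_coeff_upto[of m "Suc (Suc m)"]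
        Kr_eq_sum_krav_coeff[of N p "Suc (Suc m)"] sum.distrib sum_distrib_left algebra_simps)
  finally show ?thesis .
qed

lemma Kr_three_term:
  assumes "p \<noteq> 0" "Suc n \<le> N"
  shows "x * Kr N p n x = Kr N p (Suc n) x + alpha N p n * Kr N p n x + beta N p n * Kr N p (n - 1) x"
proof (cases n)
  case 0
  then show ?thesis using assms Kr_1[of p N x] by (simp add: alpha_def beta_def)
next
  case (Suc m)
  then show ?thesis using assms Kr_three_term_Suc[of p m N x] by simp
qed

lemma Kr_structure_relation:
  "x * bdiff (Kr N p (Suc n)) x = real (Suc n) * Kr N p (Suc n) x + real (Suc n) * p * (real N - real n) * Kr N p n x"
proof -
  let ?c = "krav_coeff N p" and ?P = "\<lambda>k. pochhammer (-x) k"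
  have "x * bdiff (Kr N p (Suc n)) x = (\<Sum>k\<le>Suc n. ?c (Suc n) k * (x * bdiff (\<lambda>y. pochhammer (-y) k) x))"
    unfolding Kr_eq_sum_krav_coeff bdiff_def sum_distrib_left sum_subtractf[symmetric]
    by (rule sum.cong) (auto simp: algebra_simps)
  also have "\<dots> = (\<Sum>k\<le>Suc n. (real k * ?c (Suc n) k) * ?P k)"
    unfolding bdiff_pochhammer_neg by (simp add: ac_simps)
  also have "\<dots> = (\<Sum>k\<le>Suc n. (real (Suc n) * ?c (Suc n) k + real (Suc n) * p * (real N - real n) * ?c n k) * ?P k)"
  proof (rule sum.cong[OF refl])
    fix k
    have "real k * ?c (Suc n) k = real (Suc n) * ?c (Suc n) k + real (Suc n) * p * (real N - real n) * ?c n k"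
      using krav_coeff_Suc_degree[of k n N p] by (simp add: algebra_simps)
    then show "real k * ?c (Suc n) k * ?P k = (real (Suc n) * ?c (Suc n) k + real (Suc n) * p * (real N - real n) * ?c n k) * ?P k"
      by (simp only:)
  qed
  also have "\<dots> = real (Suc n) * (\<Sum>k\<le>Suc n. ?c (Suc n) k * ?P k)
      + real (Suc n) * p * (real N - real n) * (\<Sum>k\<le>Suc n. ?c n k * ?P k)"
    by (simp add: sum.distrib sum_distrib_left ring_distribs mult.assoc)
  also have "\<dots> = real (Suc n) * Kr N p (Suc n) x + real (Suc n) * p * (real N - real n) * Kr N p n x"
    by (simp only: Kr_eq_sum_krav_coeff_upto[of n "Suc n", OF le_SucI[OF order_refl]] Kr_eq_sum_krav_coeff[of N p "Suc n"])
  finally show ?thesis .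
qed

subsection \<open>The difference equation and orthogonality\<close>

definition krav_diff_op :: "nat \<Rightarrow> real \<Rightarrow> (real \<Rightarrow> real) \<Rightarrow> real \<Rightarrow> real" where
  "krav_diff_op N p f x = p * (real N - x) * fdiff f x - (1 - p) * x * bdiff f x"

lemma krav_diff_op_pochhammer:
  "krav_diff_op N p (\<lambda>y. pochhammer (-y) k) x = - real k * pochhammer (-x) k
     - (if k = 0 then 0 else p * real k * (real N - real k + 1) * pochhammer (-x) (k - 1))"
proof (cases k)
  case 0
  then show ?thesis by (simp add: krav_diff_op_def fdiff_def bdiff_def)
next
  case (Suc i)
  have "pochhammer (-(x+1)) (Suc i) = (-x-1) * pochhammer (-x) i"
    by (simp only: pochhammer_rec) simp
  moreover have "pochhammer (-x) (Suc i) = (-x + real i) * pochhammer (-x) i"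
    by (simp only: pochhammer_rec')
  ultimately have fd: "fdiff (\<lambda>y. pochhammer (-y) (Suc i)) x = - (real i + 1) * pochhammer (-x) i"
    unfolding fdiff_def by (simp add: algebra_simps)
  have shift: "(real N - x) * pochhammer (-x) i = (real N - real i) * pochhammer (-x) i + pochhammer (-x) (Suc i)"
    by (simp only: pochhammer_rec') (simp add: algebra_simps)
  have "krav_diff_op N p (\<lambda>y. pochhammer (-y) k) x
      = p * ((real N - x) * fdiff (\<lambda>y. pochhammer (-y) (Suc i)) x)
        - (1 - p) * (x * bdiff (\<lambda>y. pochhammer (-y) (Suc i)) x)"
    unfolding krav_diff_op_def Suc by (simp add: algebra_simps)
  also have "\<dots> = p * (- (real i + 1) * ((real N - x) * pochhammer (-x) i)) - (1 - p) * (real (Suc i) * pochhammer (-x) (Suc i))"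
    unfolding fd bdiff_pochhammer_neg by (simp add: algebra_simps)
  also have "\<dots> = - real k * pochhammer (-x) k
     - (if k = 0 then 0 else p * real k * (real N - real k + 1) * pochhammer (-x) (k - 1))"
    unfolding shift Suc by (simp add: algebra_simps)
  finally show ?thesis .
qed

lemma krav_diff_op_Kr:
  assumes p: "p \<noteq> 0" and nN: "n \<le> N"
  shows "krav_diff_op N p (Kr N p n) x = - real n * Kr N p n x"
proof -
  let ?c = "krav_coeff N p n" and ?P = "\<lambda>k. pochhammer (-x) k"
  have lin: "krav_diff_op N p (Kr N p n) x = (\<Sum>k\<le>n. ?c k * krav_diff_op N p (\<lambda>y. pochhammer (-y) k) x)"
    unfolding krav_diff_op_def fdiff_def bdiff_def Kr_eq_sum_krav_coeff sum_distrib_left sum_subtractf[symmetric]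
    by (rule sum.cong) (auto simp: algebra_simps)
  have shift: "(\<Sum>k\<le>n. ?c k * (if k = 0 then 0 else p * real k * (real N - real k + 1) * ?P (k - 1)))
      = (\<Sum>k\<le>n. p * real (Suc k) * (real N - real k) * ?c (Suc k) * ?P k)"
  proof -
    have "(\<Sum>k\<le>n. ?c k * (if k = 0 then 0 else p * real k * (real N - real k + 1) * ?P (k - 1)))
      = (\<Sum>k\<le>Suc n. ?c k * (if k = 0 then 0 else p * real k * (real N - real k + 1) * ?P (k - 1)))"
      by (simp add: krav_coeff_eq_0)
    also have "\<dots> = (\<Sum>k\<le>n. p * real (Suc k) * (real N - real k) * ?c (Suc k) * ?P k)"
      by (subst sum.atMost_Suc_shift) (simp add: algebra_simps)
    finally show ?thesis .
  qed
  have lower: "p * real (Suc k) * (real N - real k) * ?c (Suc k) = (real n - real k) * ?c k" if "k \<le> n" for k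
  proof (cases "k < N")
    case True
    then show ?thesis by (rule krav_coeff_Suc_index[OF p])
  next
    case False
    then have "k = n" "n < Suc k" using that nN by simp_all
    then show ?thesis by (simp add: krav_coeff_eq_0)
  qed
  have "krav_diff_op N p (Kr N p n) x
      = (\<Sum>k\<le>n. (- real k * ?c k - p * real (Suc k) * (real N - real k) * ?c (Suc k)) * ?P k)"
    unfolding lin krav_diff_op_pochhammer right_diff_distrib sum_subtractf shift
    by (simp add: sum_subtractf[symmetric] algebra_simps)
  also have "\<dots> = (\<Sum>k\<le>n. - real n * (?c k * ?P k))"
  proof (rule sum.cong[OF refl])
    fix k assume "k \<in> {..n}"
    then show "(- real k * ?c k - p * real (Suc k) * (real N - real k) * ?c (Suc k)) * ?P k = - real n * (?c k * ?P k)"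
      by (simp only: lower atMost_iff) (simp add: algebra_simps)
  qed
  also have "\<dots> = - real n * Kr N p n x"
    unfolding Kr_eq_sum_krav_coeff sum_distrib_left ..
  finally show ?thesis .
qed

definition wip :: "nat \<Rightarrow> real \<Rightarrow> (real \<Rightarrow> real) \<Rightarrow> (real \<Rightarrow> real) \<Rightarrow> real" where
  "wip N p f g = (\<Sum>x\<le>N. f (real x) * g (real x) * wt N p x)"

lemma Knorm_eq_wip: "Knorm N p k = wip N p (Kr N p k) (Kr N p k)"
  unfolding Knorm_def wip_def by (simp add: power2_eq_square)

lemma wip_sum_left: "wip N p (\<lambda>x. \<Sum>k\<in>A. c k * f k x) g = (\<Sum>k\<in>A. c k * wip N p (f k) g)"
  unfolding wip_def sum_distrib_left sum_distrib_right by (subst sum.swap) (simp add: ac_simps)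

lemma wip_sum_right: "wip N p f (\<lambda>x. \<Sum>k\<in>A. c k * g k x) = (\<Sum>k\<in>A. c k * wip N p f (g k))"
  unfolding wip_def sum_distrib_left sum_distrib_right by (subst sum.swap) (simp add: ac_simps)

lemma wt_pos: "0 < p \<Longrightarrow> p < 1 \<Longrightarrow> x \<le> N \<Longrightarrow> 0 < wt N p x"
  unfolding wt_def by simp

lemma wt_balance:
  assumes "x < N"
  shows "wt N p x * p * (real N - real x) = wt N p (Suc x) * (1 - p) * real (Suc x)"
proof -
  have "real ((N - x) * (N choose x)) = real (Suc x * (N choose Suc x))"
    using binomial_absorb_comp[of N x] binomial_absorption[of x N] by simp
  then have b: "real (N choose x) * (real N - real x) = real (N choose Suc x) * real (Suc x)"
    using assms by (simp add: of_nat_diff algebra_simps)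
  have e: "N - x = Suc (N - Suc x)" using assms by simp
  have "wt N p x * p * (real N - real x) = (real (N choose x) * (real N - real x)) * (p^x*p) * ((1-p)^(N - Suc x)*(1-p))"
    unfolding wt_def e by (simp add: ac_simps)
  also have "\<dots> = wt N p (Suc x) * (1 - p) * real (Suc x)"
    unfolding b wt_def by (simp add: ac_simps)
  finally show ?thesis .
qed

text \<open>Summation by parts: the detailed balance \<open>wt_balance\<close> turns the backward difference into a forward one.\<close>
lemma wip_krav_diff_op:
  "wip N p (krav_diff_op N p f) g
   = - (\<Sum>x<N. wt N p x * p * (real N - real x) * fdiff f (real x) * fdiff g (real x))"
proof -
  let ?a = "\<lambda>x. wt N p x * p * (real N - real x)"
  have forward: "(\<Sum>x\<le>N. wt N p x * (p * (real N - real x) * fdiff f (real x)) * g (real x))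
      = (\<Sum>x<N. ?a x * fdiff f (real x) * g (real x))"
    unfolding lessThan_Suc_atMost[symmetric] by (simp add: algebra_simps)
  have "(\<Sum>x\<le>N. wt N p x * ((1 - p) * real x * bdiff f (real x)) * g (real x))
      = (\<Sum>x<N. (wt N p (Suc x) * (1 - p) * real (Suc x)) * (fdiff f (real x) * g (real x + 1)))"
    unfolding lessThan_Suc_atMost[symmetric] sum.lessThan_Suc_shift
    by (simp add: bdiff_def fdiff_def algebra_simps)
  also have "\<dots> = (\<Sum>x<N. ?a x * fdiff f (real x) * g (real x + 1))"
  proof (rule sum.cong[OF refl])
    fix x assume "x \<in> {..<N}"
    then have "wt N p x * p * (real N - real x) = wt N p (Suc x) * (1 - p) * real (Suc x)"
      by (simp add: wt_balance)
    then show "wt N p (Suc x) * (1 - p) * real (Suc x) * (fdiff f (real x) * g (real x + 1))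
        = ?a x * fdiff f (real x) * g (real x + 1)"
      by (metis mult.assoc)
  qed
  finally have backward: "(\<Sum>x\<le>N. wt N p x * ((1 - p) * real x * bdiff f (real x)) * g (real x))
      = (\<Sum>x<N. ?a x * fdiff f (real x) * g (real x + 1))" .
  have "wip N p (krav_diff_op N p f) g
     = (\<Sum>x\<le>N. wt N p x * (p * (real N - real x) * fdiff f (real x)) * g (real x))
     - (\<Sum>x\<le>N. wt N p x * ((1 - p) * real x * bdiff f (real x)) * g (real x))"
    unfolding wip_def krav_diff_op_def sum_subtractf[symmetric] by (rule sum.cong) (auto simp: algebra_simps)
  also have "\<dots> = - (\<Sum>x<N. ?a x * fdiff f (real x) * fdiff g (real x))"
    unfolding forward backward sum_subtractf[symmetric] sum_negf[symmetric]
    by (rule sum.cong[OF refl]) (simp add: fdiff_def algebra_simps)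
  finally show ?thesis .
qed

lemma Kr_orthogonal:
  assumes p: "p \<noteq> 0" and "n \<le> N" "m \<le> N" "n \<noteq> m"
  shows "wip N p (Kr N p n) (Kr N p m) = 0"
proof -
  have "wip N p (krav_diff_op N p (Kr N p n)) (Kr N p m) = - real n * wip N p (Kr N p n) (Kr N p m)"
    unfolding wip_def krav_diff_op_Kr[OF p assms(2)] sum_distrib_left by (rule sum.cong) auto
  moreover have "wip N p (krav_diff_op N p (Kr N p m)) (Kr N p n) = - real m * wip N p (Kr N p n) (Kr N p m)"
    unfolding wip_def krav_diff_op_Kr[OF p assms(3)] sum_distrib_left by (rule sum.cong) auto
  moreover have "wip N p (krav_diff_op N p (Kr N p n)) (Kr N p m) = wip N p (krav_diff_op N p (Kr N p m)) (Kr N p n)"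
    unfolding wip_krav_diff_op by (simp add: ac_simps)
  ultimately have "real n * wip N p (Kr N p n) (Kr N p m) = real m * wip N p (Kr N p n) (Kr N p m)"
    by linarith
  then have "(real n - real m) * wip N p (Kr N p n) (Kr N p m) = 0"
    by (simp add: left_diff_distrib)
  then show ?thesis using assms(4) by simp
qed

subsection \<open>Kravchuk polynomials as polynomials\<close>

lemma poly_pochhammer_neg: "poly (pochhammer [:0, -1:] k) (x::real) = pochhammer (-x) k"
  by (induction k) (simp_all add: pochhammer_rec' algebra_simps)

lemma pochhammer_neg_poly_Suc:
  "pochhammer [:0, -1::real:] (Suc k) = [:real k, -1:] * pochhammer [:0, -1:] k"
  by (simp add: pochhammer_rec' of_nat_poly)

lemma degree_lead_coeff_pochhammer_neg:
  "degree (pochhammer [:0, -1::real:] k) = k \<and> lead_coeff (pochhammer [:0, -1::real:] k) = (-1) ^ k"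
proof (induction k)
  case (Suc k)
  then have "pochhammer [:0, -1::real:] k \<noteq> 0" by auto
  then have "degree ([:real k, -1:] * pochhammer [:0, -1:] k) = Suc (degree (pochhammer [:0, -1::real:] k))"
    by (subst degree_mult_eq) auto
  with Suc show ?case
    unfolding pochhammer_neg_poly_Suc lead_coeff_mult by auto
qed simp

definition Kpoly :: "nat \<Rightarrow> real \<Rightarrow> nat \<Rightarrow> real poly" where
  "Kpoly N p n = (\<Sum>k\<le>n. smult (krav_coeff N p n k) (pochhammer [:0, -1:] k))"

lemma poly_Kpoly: "poly (Kpoly N p n) x = Kr N p n x"
  unfolding Kpoly_def Kr_eq_sum_krav_coeff poly_sum by (simp add: poly_pochhammer_neg)

lemma degree_Kpoly_le: "degree (Kpoly N p n) \<le> n"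
  unfolding Kpoly_def
  by (rule degree_sum_le) (auto intro: order.trans[OF degree_smult_le] simp: degree_lead_coeff_pochhammer_neg)

lemma coeff_Kpoly_self:
  assumes "p \<noteq> 0" "n \<le> N"
  shows "coeff (Kpoly N p n) n = 1"
proof -
  have "coeff (Kpoly N p n) n = (\<Sum>k\<le>n. krav_coeff N p n k * coeff (pochhammer [:0, -1:] k) n)"
    unfolding Kpoly_def coeff_sum by simp
  also have "\<dots> = krav_coeff N p n n * coeff (pochhammer [:0, -1:] n) n"
    unfolding lessThan_Suc_atMost[symmetric] sum.lessThan_Suc
    by (simp add: coeff_eq_0 degree_lead_coeff_pochhammer_neg)
  also have "\<dots> = (-1) ^ n * (-1) ^ n"
    using degree_lead_coeff_pochhammer_neg[of n] krav_coeff_self[OF assms] by (metis)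
  also have "\<dots> = 1"
    by (simp add: power_mult_distrib[symmetric])
  finally show ?thesis .
qed

lemma Kpoly_basis:
  assumes p: "p \<noteq> 0" and mN: "m \<le> N" and dr: "degree r \<le> m"
  shows "\<exists>c. poly r = (\<lambda>x. \<Sum>k\<le>m. c k * Kr N p k x)"
  using mN dr
proof (induction m arbitrary: r)
  case 0
  then have r: "r = [:coeff r 0:]" by (metis degree_0_id le_zero_eq)
  have "poly r = (\<lambda>x. \<Sum>k\<le>0. coeff r 0 * Kr N p k x)"
    by (rule ext, subst r) simp
  then show ?case by (intro exI[of _ "\<lambda>_. coeff r 0"])
next
  case (Suc m)
  define r' where "r' = r - smult (coeff r (Suc m)) (Kpoly N p (Suc m))"
  have "degree r' \<le> m"
  proof (rule degree_le, intro allI impI)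
    fix i assume "m < i"
    then consider "i = Suc m" | "Suc m < i" by linarith
    then show "coeff r' i = 0"
    proof cases
      case 1
      then show ?thesis unfolding r'_def using coeff_Kpoly_self[OF p Suc.prems(1)] by simp
    next
      case 2
      then have "coeff r i = 0" "coeff (Kpoly N p (Suc m)) i = 0"
        using Suc.prems(2) degree_Kpoly_le[of N p "Suc m"] by (auto intro: coeff_eq_0)
      then show ?thesis unfolding r'_def by simp
    qed
  qed
  then obtain c where c: "poly r' = (\<lambda>x. \<Sum>k\<le>m. c k * Kr N p k x)"
    using Suc by auto
  show ?case
  proof (intro exI ext)
    fix x
    have "poly r x = poly r' x + coeff r (Suc m) * Kr N p (Suc m) x"
      unfolding r'_def by (simp add: poly_Kpoly)
    then show "poly r x = (\<Sum>k\<le>Suc m. (c(Suc m := coeff r (Suc m))) k * Kr N p k x)"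
      unfolding c by simp
  qed
qed

lemma poly_eq_0_if_vanishes_on_grid:
  fixes q :: "real poly"
  assumes "degree q \<le> N" "\<And>x. x \<le> N \<Longrightarrow> poly q (real x) = 0"
  shows "q = 0"
proof (rule poly_eqI_degree[of "real ` {..N}"])
  have "card (real ` {..N}) = Suc N"
    by (subst card_image) (auto simp: inj_on_def)
  then show "degree q < card (real ` {..N})" "degree 0 < card (real ` {..N})"
    using assms(1) by simp_all
qed (use assms(2) in auto)

lemma wip_self_nonneg: "0 < p \<Longrightarrow> p < 1 \<Longrightarrow> 0 \<le> wip N p f f"
  unfolding wip_def by (intro sum_nonneg) (simp add: less_imp_le wt_pos)

lemma wip_self_eq_0_imp_eq_0:
  assumes p: "0 < p" "p < 1" and dq: "degree q \<le> N" and "wip N p (poly q) (poly q) = 0"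
  shows "q = 0"
proof (rule poly_eq_0_if_vanishes_on_grid[OF dq])
  fix x assume x: "x \<le> N"
  have "\<forall>y\<in>{..N}. poly q (real y) * poly q (real y) * wt N p y = 0"
    using assms(4) unfolding wip_def
    by (subst sum_nonneg_eq_0_iff[symmetric]) (auto simp: less_imp_le wt_pos[OF p])
  then show "poly q (real x) = 0"
    using x wt_pos[OF p x] by auto
qed

lemma Knorm_pos:
  assumes p: "0 < p" "p < 1" and kN: "k \<le> N"
  shows "0 < Knorm N p k"
proof -
  have "Kpoly N p k \<noteq> 0"
    using coeff_Kpoly_self[of p k N] p kN by auto
  moreover have "degree (Kpoly N p k) \<le> N"
    using degree_Kpoly_le[of N p k] kN by linarith
  ultimately have "wip N p (poly (Kpoly N p k)) (poly (Kpoly N p k)) \<noteq> 0"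
    using wip_self_eq_0_imp_eq_0[OF p] by blast
  moreover have "poly (Kpoly N p k) = Kr N p k"
    by (rule ext) (rule poly_Kpoly)
  ultimately show ?thesis
    using wip_self_nonneg[OF p, of N "Kr N p k"] unfolding Knorm_eq_wip by simp
qed

lemma Kr_orthogonal_lower_degree:
  assumes p: "p \<noteq> 0" and nN: "n \<le> N" and dr: "degree r < n"
  shows "wip N p (Kr N p n) (poly r) = 0"
proof -
  have "n - 1 \<le> N" "degree r \<le> n - 1"
    using nN dr by simp_all
  then obtain c where "poly r = (\<lambda>x. \<Sum>k\<le>n - 1. c k * Kr N p k x)"
    using Kpoly_basis[OF p] by blast
  then have "wip N p (Kr N p n) (poly r) = (\<Sum>k\<le>n - 1. c k * wip N p (Kr N p n) (Kr N p k))"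
    by (simp add: wip_sum_right)
  also have "\<dots> = 0"
    using dr nN by (intro sum.neutral) (auto simp: Kr_orthogonal[OF p])
  finally show ?thesis .
qed

lemma beta_pos: "0 < p \<Longrightarrow> p < 1 \<Longrightarrow> 1 \<le> n \<Longrightarrow> n \<le> N \<Longrightarrow> 0 < beta N p n"
  unfolding beta_def by (intro mult_pos_pos) auto

lemma wip_three_term:
  "wip N p f (\<lambda>x. g1 x + a * g2 x + b * g3 x) = wip N p f g1 + a * wip N p f g2 + b * wip N p f g3"
  unfolding wip_def by (simp add: sum.distrib sum_distrib_left algebra_simps)

text \<open>Both sides equal \<open>\<langle>x K\<^sub>m, K\<^sub>m\<^sub>+\<^sub>1\<rangle>\<close>.\<close>
lemma Knorm_Suc:
  assumes p: "0 < p" "p < 1" and mN: "Suc (Suc m) \<le> N"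
  shows "Knorm N p (Suc m) = beta N p (Suc m) * Knorm N p m"
proof -
  have p0: "p \<noteq> 0" using p by simp
  have "(\<lambda>x. x * Kr N p m x) = (\<lambda>x. Kr N p (Suc m) x + alpha N p m * Kr N p m x + beta N p m * Kr N p (m - 1) x)"
    "(\<lambda>x. x * Kr N p (Suc m) x)
      = (\<lambda>x. Kr N p (Suc (Suc m)) x + alpha N p (Suc m) * Kr N p (Suc m) x + beta N p (Suc m) * Kr N p m x)"
    using Kr_three_term[OF p0] mN by auto
  then have "wip N p (Kr N p (Suc m)) (\<lambda>x. x * Kr N p m x) = Knorm N p (Suc m)"
    "wip N p (Kr N p m) (\<lambda>x. x * Kr N p (Suc m) x) = beta N p (Suc m) * Knorm N p m"
    unfolding Knorm_eq_wip using mN by (simp_all add: wip_three_term Kr_orthogonal[OF p0])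
  moreover have "wip N p (Kr N p (Suc m)) (\<lambda>x. x * Kr N p m x) = wip N p (Kr N p m) (\<lambda>x. x * Kr N p (Suc m) x)"
    unfolding wip_def by (simp add: ac_simps)
  ultimately show ?thesis by simp
qed

lemma christoffel_darboux:
  assumes p: "0 < p" "p < 1" and mN: "Suc m \<le> N"
  shows "(x - t) * (\<Sum>k\<le>m. Kr N p k x * Kr N p k t / Knorm N p k)
       = (Kr N p (Suc m) x * Kr N p m t - Kr N p m x * Kr N p (Suc m) t) / Knorm N p m"
  using mN
proof (induction m)
  case 0
  then show ?case using p by (simp add: Kr_1 field_simps)
next
  case (Suc m)
  have p0: "p \<noteq> 0" using p by simp
  have h0: "Knorm N p m \<noteq> 0" using Knorm_pos[OF p, of m N] Suc.prems by simp
  have b0: "beta N p (Suc m) \<noteq> 0" using beta_pos[OF p, of "Suc m" N] Suc.prems by simp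
  have h1: "Knorm N p (Suc m) = beta N p (Suc m) * Knorm N p m" using Knorm_Suc[OF p] Suc.prems by simp
  have rec: "y * Kr N p (Suc m) y
      = Kr N p (Suc (Suc m)) y + alpha N p (Suc m) * Kr N p (Suc m) y + beta N p (Suc m) * Kr N p m y" for y
    using Kr_three_term[OF p0] Suc.prems by simp
  have "(x - t) * (\<Sum>k\<le>Suc m. Kr N p k x * Kr N p k t / Knorm N p k)
     = (x - t) * (\<Sum>k\<le>m. Kr N p k x * Kr N p k t / Knorm N p k)
       + ((x * Kr N p (Suc m) x) * Kr N p (Suc m) t - Kr N p (Suc m) x * (t * Kr N p (Suc m) t)) / Knorm N p (Suc m)"
    by (simp add: algebra_simps add_divide_distrib diff_divide_distrib)
  also have "\<dots> = (Kr N p (Suc m) x * Kr N p m t - Kr N p m x * Kr N p (Suc m) t) / Knorm N p m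
       + ((x * Kr N p (Suc m) x) * Kr N p (Suc m) t - Kr N p (Suc m) x * (t * Kr N p (Suc m) t)) / Knorm N p (Suc m)"
    using Suc by simp
  also have "\<dots> = (Kr N p (Suc (Suc m)) x * Kr N p (Suc m) t - Kr N p (Suc m) x * Kr N p (Suc (Suc m)) t) / Knorm N p (Suc m)"
    unfolding rec h1 using h0 b0 by (simp add: field_simps)
  finally show ?case .
qed

subsection \<open>The kernel and the Kravchuk--Sobolev polynomials\<close>

lemma kern_eq_An_Bn:
  assumes p: "0 < p" "p < 1" and n: "1 \<le> n" "n \<le> N" and nz: "ffac (x - y) (Suc j) \<noteq> 0"
  shows "kern N p (n - 1) 0 j x y = An N p j n x y * Kr N p n x + Bn N p j n x y * Kr N p (n - 1) x"
proof -
  obtain m where m: "n = Suc m" using n(1) by (cases n) auto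
  define S where "S = (\<lambda>t. \<Sum>k\<le>m. (Kr N p k x / Knorm N p k) * Kr N p k t)"
  define f where "f = (\<lambda>t. (Kr N p n x / Knorm N p m) * Kr N p m t + (- Kr N p m x / Knorm N p m) * Kr N p n t)"
  have "(x - t) * S t = f t" for t
  proof -
    have "(x - t) * S t = (x - t) * (\<Sum>k\<le>m. Kr N p k x * Kr N p k t / Knorm N p k)"
      unfolding S_def by (simp add: ac_simps)
    also have "\<dots> = f t"
      using christoffel_darboux[OF p, of m N x t] n(2) unfolding f_def m by (simp add: diff_divide_distrib)
    finally show ?thesis .
  qed
  then have "fdiffn j S y = fact j / ffac (x - y) (Suc j) * (\<Sum>k\<le>j. fdiffn k f y / fact k * ffac (x - y) k)"
    using fdiffn_divide_linear_factor nz by blast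
  also have "\<dots> = fact j / ffac (x - y) (Suc j) * (\<Sum>k\<le>j.
      (Kr N p n x / Knorm N p m * fdiffn k (Kr N p m) y - Kr N p m x / Knorm N p m * fdiffn k (Kr N p n) y) / fact k * ffac (x - y) k)"
    unfolding f_def fdiffn_linear by simp
  also have "\<dots> = An N p j n x y * Kr N p n x + Bn N p j n x y * Kr N p (n - 1) x"
    unfolding An_def Bn_def m
    by (simp add: sum_distrib_left sum_subtractf[symmetric] sum.distrib[symmetric] algebra_simps diff_divide_distrib)
  finally show ?thesis
    unfolding kern_def S_def fdiffn_sum m by (simp add: ac_simps)
qed

definition kern_poly :: "nat \<Rightarrow> real \<Rightarrow> nat \<Rightarrow> nat \<Rightarrow> real \<Rightarrow> real poly" where
  "kern_poly N p j n y = (\<Sum>k\<le>n - 1. smult (fdiffn j (Kr N p k) y / Knorm N p k) (Kpoly N p k))"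

lemma poly_kern_poly_fun:
  "poly (kern_poly N p j n y) = (\<lambda>x. \<Sum>k\<le>n - 1. (fdiffn j (Kr N p k) y / Knorm N p k) * Kr N p k x)"
  unfolding kern_poly_def by (rule ext) (simp add: poly_sum poly_Kpoly)

lemma poly_kern_poly: "poly (kern_poly N p j n y) x = kern N p (n - 1) 0 j x y"
  unfolding poly_kern_poly_fun kern_def by (simp add: ac_simps)

lemma fdiffn_kern_poly: "fdiffn j (poly (kern_poly N p j n y)) t = kern N p (n - 1) j j t y"
  unfolding poly_kern_poly_fun fdiffn_sum kern_def by (simp add: ac_simps)

lemma degree_kern_poly_le: "degree (kern_poly N p j n y) \<le> n - 1"
  unfolding kern_poly_def
  by (rule degree_sum_le) (auto intro: order.trans[OF degree_smult_le] order.trans[OF degree_Kpoly_le])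

lemma wip_kern_poly:
  assumes p: "0 < p" "p < 1" and nN: "n \<le> N" and dr: "degree r < n"
  shows "wip N p (poly (kern_poly N p j n y)) (poly r) = fdiffn j (poly r) y"
proof -
  have p0: "p \<noteq> 0" using p by simp
  have "n - 1 \<le> N" "degree r \<le> n - 1"
    using nN dr by simp_all
  then obtain c where c: "poly r = (\<lambda>x. \<Sum>m\<le>n - 1. c m * Kr N p m x)"
    using Kpoly_basis[OF p0] by blast
  have "wip N p (poly (kern_poly N p j n y)) (Kr N p m) = fdiffn j (Kr N p m) y" if m: "m \<le> n - 1" for m
  proof -
    have "wip N p (poly (kern_poly N p j n y)) (Kr N p m)
        = (\<Sum>k\<le>n - 1. if k = m then fdiffn j (Kr N p k) y / Knorm N p k * Knorm N p m else 0)"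
      unfolding poly_kern_poly_fun wip_sum_left using m nN
      by (intro sum.cong refl) (auto simp: Kr_orthogonal[OF p0] Knorm_eq_wip)
    also have "\<dots> = fdiffn j (Kr N p m) y"
    proof -
      have "m \<le> N" using m nN by linarith
      then have "Knorm N p m \<noteq> 0" using Knorm_pos[OF p] by (metis less_irrefl)
      then show ?thesis using m by simp
    qed
    finally show ?thesis .
  qed
  then show ?thesis
    unfolding c wip_sum_right fdiffn_sum by simp
qed

lemma weighted_Cauchy_Schwarz:
  fixes w s t :: "nat \<Rightarrow> real"
  assumes "\<And>k. k \<in> A \<Longrightarrow> 0 \<le> w k"
  shows "(\<Sum>k\<in>A. w k * s k * t k)\<^sup>2 \<le> (\<Sum>k\<in>A. w k * (s k)\<^sup>2) * (\<Sum>k\<in>A. w k * (t k)\<^sup>2)"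
proof -
  have "(\<Sum>k\<in>A. (sqrt (w k) * s k) * (sqrt (w k) * t k))\<^sup>2
      \<le> (\<Sum>k\<in>A. (sqrt (w k) * s k)\<^sup>2) * (\<Sum>k\<in>A. (sqrt (w k) * t k)\<^sup>2)"
    by (rule Cauchy_Schwarz_ineq_sum)
  moreover have "(sqrt (w k) * s k) * (sqrt (w k) * t k) = w k * s k * t k"
    "(sqrt (w k) * s k)\<^sup>2 = w k * (s k)\<^sup>2" "(sqrt (w k) * t k)\<^sup>2 = w k * (t k)\<^sup>2" if "k \<in> A" for k
    using assms[OF that] by (simp_all add: power_mult_distrib algebra_simps)
  ultimately show ?thesis
    by (metis (no_types, lifting) sum.cong)
qed

text \<open>\<open>\<delta>\<^sub>n - 1\<close> is a sum of nonnegative terms; the mixed one is a Gram determinant.\<close>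
lemma deltan_ge_1:
  assumes p: "0 < p" "p < 1" and "0 \<le> lam" "0 \<le> mu" "n \<le> N"
  shows "1 \<le> deltan N p lam mu j n"
proof -
  define w where "w k = 1 / Knorm N p k" for k
  define s where "s k = fdiffn j (Kr N p k) 0" for k
  define t where "t k = fdiffn j (Kr N p k) (real N)" for k
  define a where "a = (\<Sum>k\<le>n - 1. w k * (s k)\<^sup>2)"
  define d where "d = (\<Sum>k\<le>n - 1. w k * (t k)\<^sup>2)"
  define b where "b = (\<Sum>k\<le>n - 1. w k * s k * t k)"
  have w: "0 \<le> w k" if "k \<in> {..n - 1}" for k
  proof -
    have "k \<le> N" using that assms(5) by auto
    then show ?thesis unfolding w_def using Knorm_pos[OF p] by (simp add: less_imp_le)
  qed
  have "0 \<le> a" "0 \<le> d"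
    unfolding a_def d_def using w by (auto intro!: sum_nonneg)
  moreover have "b\<^sup>2 \<le> a * d"
    unfolding a_def b_def d_def using w by (rule weighted_Cauchy_Schwarz)
  moreover have "kern N p (n - 1) j j 0 0 = a" "kern N p (n - 1) j j (real N) (real N) = d"
    "kern N p (n - 1) j j 0 (real N) = b" "kern N p (n - 1) j j (real N) 0 = b"
    unfolding kern_def a_def b_def d_def w_def s_def t_def by (simp_all add: power2_eq_square ac_simps)
  then have "deltan N p lam mu j n = 1 + lam * a + mu * d + lam * mu * (a * d - b\<^sup>2)"
    unfolding deltan_def by (simp add: power2_eq_square algebra_simps)
  ultimately show ?thesis
    using assms(3,4) by (smt (verit) mult_nonneg_nonneg)
qed

definition KSexplicit :: "nat \<Rightarrow> real \<Rightarrow> real \<Rightarrow> real \<Rightarrow> nat \<Rightarrow> nat \<Rightarrow> real poly" where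
  "KSexplicit N p lam mu j n = Kpoly N p n - smult (lam * Phi1 N p lam mu j n) (kern_poly N p j n 0)
      - smult (mu * Phi2 N p lam mu j n) (kern_poly N p j n (real N))"

lemma poly_KSexplicit_fun:
  "poly (KSexplicit N p lam mu j n) = (\<lambda>x. Kr N p n x - lam * Phi1 N p lam mu j n * poly (kern_poly N p j n 0) x
      - mu * Phi2 N p lam mu j n * poly (kern_poly N p j n (real N)) x)"
  unfolding KSexplicit_def by (rule ext) (simp add: poly_Kpoly)

lemma poly_KSexplicit:
  "poly (KSexplicit N p lam mu j n) x = Kr N p n x - lam * Phi1 N p lam mu j n * kern N p (n - 1) 0 j x 0
      - mu * Phi2 N p lam mu j n * kern N p (n - 1) 0 j x (real N)"
  unfolding poly_KSexplicit_fun poly_kern_poly ..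

lemma degree_KSexplicit:
  assumes "p \<noteq> 0" "1 \<le> n" "n \<le> N"
  shows "degree (KSexplicit N p lam mu j n) = n" "coeff (KSexplicit N p lam mu j n) n = 1"
proof -
  have "degree (kern_poly N p j n y) < n" for y
    using degree_kern_poly_le[of N p j n y] assms(2) by linarith
  then have "coeff (kern_poly N p j n y) n = 0" "degree (kern_poly N p j n y) \<le> n" for y
    by (auto intro: coeff_eq_0 less_imp_le)
  then show c: "coeff (KSexplicit N p lam mu j n) n = 1"
    unfolding KSexplicit_def using coeff_Kpoly_self[OF assms(1,3)] by simp
  have "degree (KSexplicit N p lam mu j n) \<le> n"
    unfolding KSexplicit_def using degree_Kpoly_le[of N p n] \<open>\<And>y. degree (kern_poly N p j n y) \<le> n\<close>
    by (intro degree_diff_le order.trans[OF degree_smult_le]) auto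
  with c show "degree (KSexplicit N p lam mu j n) = n"
    using le_degree[of "KSexplicit N p lam mu j n" n] by simp
qed

lemma cramer_2x2:
  fixes l m a b c d d0 dN P1 P2 \<delta> :: real
  assumes "\<delta> = (1 + l * a) * (1 + m * d) - l * m * b * c" "\<delta> \<noteq> 0"
    "P1 = (d0 * (1 + m * d) - m * b * dN) / \<delta>" "P2 = ((1 + l * a) * dN - l * c * d0) / \<delta>"
  shows "P1 = d0 - l * P1 * a - m * P2 * b" "P2 = dN - l * P1 * c - m * P2 * d"
proof -
  have e1: "P1 * \<delta> = d0 * (1 + m * d) - m * b * dN" and e2: "P2 * \<delta> = (1 + l * a) * dN - l * c * d0"
    using assms(2-4) by simp_all
  have "(P1 + l * P1 * a + m * P2 * b) * \<delta> = (P1 * \<delta>) * (1 + l * a) + m * b * (P2 * \<delta>)"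
    by (simp add: algebra_simps)
  also have "\<dots> = d0 * \<delta>" unfolding e1 e2 by (simp add: assms(1) algebra_simps)
  finally show "P1 = d0 - l * P1 * a - m * P2 * b" using assms(2) by simp
  have "(P2 + l * P1 * c + m * P2 * d) * \<delta> = (P2 * \<delta>) * (1 + m * d) + l * c * (P1 * \<delta>)"
    by (simp add: algebra_simps)
  also have "\<dots> = dN * \<delta>" unfolding e1 e2 by (simp add: assms(1) algebra_simps)
  finally show "P2 = dN - l * P1 * c - m * P2 * d" using assms(2) by simp
qed

lemma wip_diff_left:
  "wip N p (\<lambda>x. f x - a * g x - b * h x) k = wip N p f k - a * wip N p g k - b * wip N p h k"
  unfolding wip_def by (simp add: sum_subtractf[symmetric] sum_distrib_left algebra_simps)

lemma fdiffn_KSexplicit: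
  "fdiffn j (poly (KSexplicit N p lam mu j n)) t = fdiffn j (Kr N p n) t
     - lam * Phi1 N p lam mu j n * kern N p (n - 1) j j t 0 - mu * Phi2 N p lam mu j n * kern N p (n - 1) j j t (real N)"
  unfolding poly_KSexplicit_fun by (simp add: fdiffn_diff fdiffn_cmult fdiffn_kern_poly)

lemma sip_KSexplicit_lower_degree:
  assumes p: "0 < p" "p < 1" and "0 < lam" "0 < mu" "n \<le> N" and dr: "degree r < n"
  shows "sip N p lam mu j (poly (KSexplicit N p lam mu j n)) (poly r) = 0"
proof -
  have "deltan N p lam mu j n \<noteq> 0"
    using deltan_ge_1[OF p, of lam mu n N j] assms(3-5) by simp
  note Phi = cramer_2x2[OF deltan_def this Phi1_def Phi2_def]
  have "wip N p (poly (KSexplicit N p lam mu j n)) (poly r)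
      = - lam * Phi1 N p lam mu j n * fdiffn j (poly r) 0 - mu * Phi2 N p lam mu j n * fdiffn j (poly r) (real N)"
    unfolding poly_KSexplicit_fun wip_diff_left
    using p assms(5) dr by (simp add: Kr_orthogonal_lower_degree wip_kern_poly)
  moreover have "fdiffn j (poly (KSexplicit N p lam mu j n)) 0 = Phi1 N p lam mu j n"
    "fdiffn j (poly (KSexplicit N p lam mu j n)) (real N) = Phi2 N p lam mu j n"
    unfolding fdiffn_KSexplicit using Phi by simp_all
  ultimately show ?thesis
    unfolding sip_def wip_def by simp
qed

lemma sip_self_eq_0_imp_eq_0:
  assumes p: "0 < p" "p < 1" and "0 \<le> lam" "0 \<le> mu" "degree e \<le> N"
    and "sip N p lam mu j (poly e) (poly e) = 0"
  shows "e = 0"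
proof (rule wip_self_eq_0_imp_eq_0[OF p assms(5)])
  have "0 \<le> lam * (fdiffn j (poly e) 0)\<^sup>2" "0 \<le> mu * (fdiffn j (poly e) (real N))\<^sup>2"
    using assms(3,4) by simp_all
  moreover have "wip N p (poly e) (poly e) + lam * (fdiffn j (poly e) 0)\<^sup>2 + mu * (fdiffn j (poly e) (real N))\<^sup>2 = 0"
    using assms(6) unfolding sip_def wip_def by (simp add: power2_eq_square)
  ultimately show "wip N p (poly e) (poly e) = 0"
    using wip_self_nonneg[OF p] by (smt (verit))
qed

lemma sip_diff_left: "sip N p lam mu j (\<lambda>x. f x - g x) h = sip N p lam mu j f h - sip N p lam mu j g h"
  unfolding sip_def fdiffn_diff by (simp add: algebra_simps sum_subtractf)

lemma KSpoly_eq_KSexplicit: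
  assumes p: "0 < p" "p < 1" and lm: "0 < lam" "0 < mu" and n: "1 \<le> n" "n \<le> N"
  shows "KSpoly N p lam mu j n = KSexplicit N p lam mu j n"
  unfolding KSpoly_def
proof (rule the_equality)
  let ?U = "KSexplicit N p lam mu j n"
  have p0: "p \<noteq> 0" using p by simp
  note U = degree_KSexplicit[OF p0 n]
  show "degree ?U = n \<and> lead_coeff ?U = 1 \<and> (\<forall>r. degree r < n \<longrightarrow> sip N p lam mu j (poly ?U) (poly r) = 0)"
    using U sip_KSexplicit_lower_degree[OF p lm n(2)] by simp
  fix q assume q: "degree q = n \<and> lead_coeff q = 1 \<and> (\<forall>r. degree r < n \<longrightarrow> sip N p lam mu j (poly q) (poly r) = 0)"
  define e where "e = q - ?U"
  have "coeff e n = 0" "degree e \<le> n"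
    unfolding e_def using q U by (auto intro: degree_diff_le)
  have de: "degree e < n"
  proof (cases "e = 0")
    case False
    then have "degree e \<noteq> n" using \<open>coeff e n = 0\<close> by auto
    with \<open>degree e \<le> n\<close> show ?thesis by simp
  qed (use n(1) in simp)
  have "sip N p lam mu j (poly q) (poly e) = 0" "sip N p lam mu j (poly ?U) (poly e) = 0"
    using q de sip_KSexplicit_lower_degree[OF p lm n(2) de] by simp_all
  moreover have "poly e = (\<lambda>x. poly q x - poly ?U x)"
    unfolding e_def by (rule ext) simp
  ultimately have "sip N p lam mu j (poly e) (poly e) = 0"
    by (simp only: sip_diff_left)
  then have "e = 0"
    using sip_self_eq_0_imp_eq_0[OF p] lm de n(2) by (meson less_imp_le less_le_trans order_less_imp_le)
  then show "q = ?U"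
    unfolding e_def by simp
qed

lemma KS_connection:
  assumes p: "0 < p" "p < 1" and lm: "0 < lam" "0 < mu" and n: "1 \<le> n" "n \<le> N"
    and "admissible N j x"
  shows "KS N p lam mu j n x = C1 N p lam mu j n x * Kr N p n x + D1 N p lam mu j n x * Kr N p (n - 1) x"
proof -
  have a0: "ffac (x - 0) (Suc j) \<noteq> 0" and aN: "ffac (x - real N) (Suc j) \<noteq> 0"
    using assms(7) unfolding admissible_def by auto
  show ?thesis
    unfolding KS_def KSpoly_eq_KSexplicit[OF p lm n] poly_KSexplicit C1_def D1_def
      kern_eq_An_Bn[OF p n a0] kern_eq_An_Bn[OF p n aN] by (simp add: algebra_simps)
qed

subsection \<open>Ladder relations and the second-order equation\<close>

text \<open>This is where the formulas for \<open>C\<^sub>2\<^sub>,\<^sub>n, D\<^sub>2\<^sub>,\<^sub>n\<close> and \<open>E\<^sub>2\<^sub>,\<^sub>n, F\<^sub>2\<^sub>,\<^sub>n\<close> come from.\<close>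
lemma Kr_lower_combination:
  assumes p: "0 < p" "p < 1" and n: "2 \<le> n" "n \<le> N"
  shows "c * Kr N p (n - 1) y + d * Kr N p (n - 2) y
    = (- d / beta N p (n - 1)) * Kr N p n y + (c + (- d / beta N p (n - 1)) * (alpha N p (n - 1) - y)) * Kr N p (n - 1) y"
proof -
  have "1 \<le> n - 1" "n - 1 \<le> N" using n by linarith+
  then have b0: "beta N p (n - 1) \<noteq> 0" using beta_pos[OF p] by (metis less_irrefl)
  have "y * Kr N p (n - 1) y = Kr N p n y + alpha N p (n - 1) * Kr N p (n - 1) y + beta N p (n - 1) * Kr N p (n - 2) y"
    using Kr_three_term[of p "n - 1" N y] p n by (simp add: numeral_2_eq_2 Suc_diff_Suc)
  then have R: "Kr N p (n - 2) y = (y * Kr N p (n - 1) y - Kr N p n y - alpha N p (n - 1) * Kr N p (n - 1) y) / beta N p (n - 1)"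
    using b0 by (simp add: field_simps)
  show ?thesis unfolding R using b0 by (simp add: field_simps)
qed

text \<open>Writing KS_m = C K_m + D K_(m-1) at y and y - 1, the structure relation removes the shifted
  arguments and the three-term recurrence removes K_(m-2).\<close>
lemma KS_ladder:
  assumes p: "0 < p" "p < 1" and lm: "0 < lam" "0 < mu" and m: "2 \<le> m" "m \<le> N"
    and "admissible N j y" "admissible N j (y - 1)"
  shows "y * bdiff (KS N p lam mu j m) y = E1 N p lam mu j m y * Kr N p m y + F1 N p lam mu j m y * Kr N p (m - 1) y"
proof -
  obtain l where l: "m = Suc (Suc l)" using m(1) by (metis add_2_eq_Suc le_Suc_ex)
  define P where "P = Kr N p m"
  define Q where "Q = Kr N p (m - 1)"
  define c where "c = C1 N p lam mu j m"
  define d where "d = D1 N p lam mu j m"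
  have u: "KS N p lam mu j m t = c t * P t + d t * Q t" if "admissible N j t" for t
    unfolding c_def d_def P_def Q_def using KS_connection[OF p lm _ m(2) that] m by simp
  have sP: "y * (P y - P (y - 1)) = real m * P y + real m * p * (real N - real m + 1) * Q y"
    using Kr_structure_relation[of y N p "Suc l"] unfolding P_def Q_def bdiff_def l by simp
  have sQ: "y * (Q y - Q (y - 1)) = (real m - 1) * Q y + (real m - 1) * p * (real N - real m + 2) * Kr N p (m - 2) y"
    using Kr_structure_relation[of y N p l] unfolding Q_def bdiff_def l by (simp add: algebra_simps)
  have "y * bdiff (KS N p lam mu j m) y
      = y * (c y - c (y - 1)) * P y + y * (d y - d (y - 1)) * Q y
        + c (y - 1) * (y * (P y - P (y - 1))) + d (y - 1) * (y * (Q y - Q (y - 1)))"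
    unfolding bdiff_def u[OF assms(7)] u[OF assms(8)] by (simp add: algebra_simps)
  also have "\<dots> = y * (c y - c (y - 1)) * P y + y * (d y - d (y - 1)) * Q y
        + c (y - 1) * (real m * P y + real m * p * (real N - real m + 1) * Q y)
        + ((d (y - 1) * (real m - 1)) * Kr N p (m - 1) y + (d (y - 1) * (real m - 1) * p * (real N - real m + 2)) * Kr N p (m - 2) y)"
    unfolding sP sQ by (simp add: Q_def algebra_simps)
  also have "\<dots> = E1 N p lam mu j m y * P y + F1 N p lam mu j m y * Q y"
    unfolding Kr_lower_combination[OF p m]
    unfolding P_def[symmetric] Q_def[symmetric] E1_def F1_def bdiff_def c_def[symmetric] d_def[symmetric]
    by (simp add: algebra_simps add_divide_distrib diff_divide_distrib)
  finally show ?thesis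
    unfolding P_def Q_def .
qed

lemma KS_system:
  assumes p: "0 < p" "p < 1" and lm: "0 < lam" "0 < mu" and n: "3 \<le> n" "n \<le> N"
    and y: "admissible N j y" "admissible N j (y - 1)"
  defines "u \<equiv> KS N p lam mu j n" and "v \<equiv> KS N p lam mu j (n - 1)"
    and "\<Theta> \<equiv> Theta N p lam mu j n y" and "L \<equiv> Lam N p lam mu j n y"
  shows "\<Theta> * bdiff u y = - L 2 1 * u y + L 1 1 * v y"
    and "\<Theta> * bdiff v y = L 2 2 * u y - L 1 2 * v y"
proof -
  have n': "1 \<le> n" "2 \<le> n - 1" "1 \<le> n - 1" "n - 1 \<le> N" "2 \<le> n" and nn: "n - 1 - 1 = n - 2"
    using n by linarith+
  let ?P = "Kr N p n y" and ?Q = "Kr N p (n - 1) y"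
  have u: "u y = C1 N p lam mu j n y * ?P + D1 N p lam mu j n y * ?Q"
    unfolding u_def by (rule KS_connection[OF p lm n'(1) n(2) y(1)])
  have v: "v y = C2 N p lam mu j n y * ?P + D2 N p lam mu j n y * ?Q"
    using KS_connection[OF p lm n'(3,4) y(1)] Kr_lower_combination[OF p n'(5) n(2)]
    unfolding v_def C2_def D2_def nn by simp
  have du: "y * bdiff u y = E1 N p lam mu j n y * ?P + F1 N p lam mu j n y * ?Q"
    unfolding u_def using KS_ladder[OF p lm _ n(2) y] n by simp
  have dv: "y * bdiff v y = E2 N p lam mu j n y * ?P + F2 N p lam mu j n y * ?Q"
    using KS_ladder[OF p lm n'(2,4) y] Kr_lower_combination[OF p n'(5) n(2)]
    unfolding v_def E2_def F2_def nn by simp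
  define W where "W = C1 N p lam mu j n y * D2 N p lam mu j n y - C2 N p lam mu j n y * D1 N p lam mu j n y"
  have "\<Theta> = y * W"
    unfolding \<Theta>_def Theta_def W_def ..
  then have "\<Theta> * bdiff u y = W * (y * bdiff u y)" "\<Theta> * bdiff v y = W * (y * bdiff v y)"
    by simp_all
  then show "\<Theta> * bdiff u y = - L 2 1 * u y + L 1 1 * v y" "\<Theta> * bdiff v y = L 2 2 * u y - L 1 2 * v y"
    unfolding du dv u v W_def L_def Lam_def Ef_def Ff_def Cf_def Df_def by (simp_all add: algebra_simps)
qed

text \<open>Eliminating \<open>v\<close> from the first-order system at \<open>x\<close> and \<open>x - 1\<close>; only the equation for \<open>\<nabla>u\<close>
  is needed at \<open>x - 1\<close>.\<close>
lemma first_order_system_elimination: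
  fixes T0 T1 a a' b b' c d u0 u1 u2 v0 v1 :: real
  assumes du0: "T0 * (u0 - u1) = - b * u0 + a * v0"
    and du1: "T1 * (u1 - u2) = - b' * u1 + a' * v1"
    and dv0: "T0 * (v0 - v1) = d * u0 - c * v0"
    and a: "a \<noteq> 0"
  shows "T0 * T1 * ((u0 - u1) - (u1 - u2))
     + (T0 * ((T0 - T1) + b' + c) - (a - a') * (T0 + c) * T0 / a) * (u0 - u1)
     + (T0 * (b - b') + c * b - (a - a') * b * (T0 + c) / a - a' * d) * u0 = 0"
proof -
  have av0: "a * v0 = T0 * (u0 - u1) + b * u0"
    using du0 by simp
  have "T0 * (T1 * (u1 - u2) + b' * u1) = T0 * (a' * v1)"
    using du1 by simp
  also have "\<dots> = a' * (T0 * v0 - T0 * (v0 - v1))"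
    by (simp add: algebra_simps)
  also have "\<dots> = (T0 + c) * a' * v0 - a' * d * u0"
    unfolding dv0 by (simp add: algebra_simps)
  finally have "T0 * (T1 * (u1 - u2) + b' * u1) = (T0 + c) * a' * v0 - a' * d * u0" .
  then have "a * (T0 * (T1 * (u1 - u2) + b' * u1)) = a * ((T0 + c) * a' * v0 - a' * d * u0)"
    by simp
  also have "\<dots> = (T0 + c) * a' * (a * v0) - a * a' * d * u0"
    by (simp add: algebra_simps)
  finally have "a * (T0 * (T1 * (u1 - u2) + b' * u1)) = (T0 + c) * a' * (T0 * (u0 - u1) + b * u0) - a * a' * d * u0"
    unfolding av0 .
  moreover define G where "G = T0 * T1 * ((u0 - u1) - (u1 - u2))
     + (T0 * ((T0 - T1) + b' + c) - (a - a') * (T0 + c) * T0 / a) * (u0 - u1)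
     + (T0 * (b - b') + c * b - (a - a') * b * (T0 + c) / a - a' * d) * u0"
  moreover have "a * G = (T0 + c) * a' * (T0 * (u0 - u1) + b * u0) - a * a' * d * u0 - a * (T0 * (T1 * (u1 - u2) + b' * u1))"
    unfolding G_def using a by (simp add: divide_simps) (simp add: algebra_simps)
  ultimately have "a * G = 0" by simp
  then show ?thesis
    unfolding G_def using a by simp
qed

theorem mainTheorem7:
  fixes N n j :: nat and p lam mu x :: real
  assumes "0 < p" "p < 1" "0 < lam" "0 < mu"
    and "3 \<le> n" "n \<le> N"
    and "admissible N j x" "admissible N j (x - 1)" "admissible N j (x - 2)"
    and "Lam N p lam mu j n x 1 1 \<noteq> 0"
  shows "(let Th = Theta N p lam mu j n;
              L = (\<lambda>y i k. Lam N p lam mu j n y i k);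
              K = KS N p lam mu j n;
              FF = Th x * Th (x - 1);
              GG = Th x * (bdiff Th x + L (x - 1) 2 1 + L x 1 2)
                   - bdiff (\<lambda>y. L y 1 1) x * (Th x + L x 1 2) * Th x / L x 1 1;
              HH = Th x * bdiff (\<lambda>y. L y 2 1) x + L x 1 2 * L x 2 1
                   - bdiff (\<lambda>y. L y 1 1) x * L x 2 1 * (Th x + L x 1 2) / L x 1 1
                   - L (x - 1) 1 1 * L x 2 2
          in FF * bdiff (bdiff K) x + GG * bdiff K x + HH * K x = 0)"
proof -
  have x2: "x - 1 - 1 = x - 2" by simp
  note at_x = KS_system[OF assms(1-6,7,8), unfolded bdiff_def]
  note at_x1 = KS_system[OF assms(1-6,8), unfolded x2, OF assms(9), unfolded bdiff_def x2]
  show ?thesis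
    unfolding Let_def bdiff_def x2[symmetric]
    using first_order_system_elimination[OF at_x(1) at_x1(1) at_x(2) assms(10)] by (simp only: x2)
qed

end
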